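(* Let $S\subseteq\mathbb{C}^2\otimes\mathbb{C}^2$ be a two-dimensional subspace whose orthogonal projector $P_S$ is separable. Then $S$ has an orthonormal basis consisting of product states. Moreover, if $|\psi\rangle$ and $|\Phi\rangle$ are any two orthogonal entangled unit vectors in $S^\perp$, then (i) $\psi\Phi^{-1}$ has two antiparallel eigenvalues, and (ii) $C(\psi)=C(\Phi)$.
   Context: For a two-qubit pure state $|\psi\rangle\in\mathbb{C}^2\otimes\mathbb{C}^2$, $\psi$ denotes the unique $2\times 2$ complex matrix with $|\psi\rangle=(\mathbb{I}\otimes\psi)|\Psi^+\rangle$, where $|\Psi^+\rangle=\tfrac{1}{\sqrt2}(|00\rangle+|11\rangle)$. The concurrence of $|\psi\rangle$ is $C(\psi)=|\det\psi|$; $|\psi\rangle$ is entangled iff $C(\psi)>0$, i.e. iff $\psi$ is invertible. Two complex numbers $z_1,z_2$ are antiparallel if $z_1=az_2$ for some real $a<0$; a $2\times2$ matrix "has two antiparallel eigenvalues" if its two eigenvalues are antiparallel. A positive semidefinite operator on $\mathbb{C}^2\otimes\mathbb{C}^2$ is separable if it is a nonnegative linear combination of product projectors $|a\rangle\langle a|\otimes|b\rangle\langle b|$. *)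

theory Defs
  imports "HOL-Analysis.Analysis"
begin

text \<open>The two-qubit space C^2 (x) C^2 is modelled as complex^(2 \<times> 2):
  the component (i,j) is the coefficient of |i j>.\<close>

type_synonym qubit = "complex ^ 2"
type_synonym qstate = "complex ^ (2 \<times> 2)"
type_synonym qop = "complex ^ (2 \<times> 2) ^ (2 \<times> 2)"

definition cinner :: "complex ^ 'n \<Rightarrow> complex ^ 'n \<Rightarrow> complex" where
  "cinner x y = (\<Sum>i\<in>UNIV. cnj (x $ i) * y $ i)"

definition unit_vec :: "complex ^ 'n \<Rightarrow> bool" where
  "unit_vec x \<longleftrightarrow> cinner x x = 1"

definition tensor :: "qubit \<Rightarrow> qubit \<Rightarrow> qstate" where
  "tensor a b = (\<chi> p. a $ fst p * b $ snd p)"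

definition kron :: "complex^2^2 \<Rightarrow> complex^2^2 \<Rightarrow> qop" where
  "kron A B = (\<chi> p q. A $ fst p $ fst q * B $ snd p $ snd q)"

definition outer :: "complex ^ 'n \<Rightarrow> complex ^ 'n \<Rightarrow> complex ^ 'n ^ 'n" where
  "outer x y = (\<chi> i j. x $ i * cnj (y $ j))"

definition is_product_state :: "qstate \<Rightarrow> bool" where
  "is_product_state v \<longleftrightarrow> (\<exists>a b. v = tensor a b)"

definition Psi_plus :: qstate where
  "Psi_plus = complex_of_real (1 / sqrt 2) *s
      (tensor (axis 0 1) (axis 0 1) + tensor (axis 1 1) (axis 1 1))"

definition state_mat :: "qstate \<Rightarrow> complex^2^2" where
  "state_mat v = (THE M. kron (mat 1) M *v Psi_plus = v)"

definition concurrence :: "qstate \<Rightarrow> real" where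
  "concurrence v = cmod (det (state_mat v))"

definition entangled :: "qstate \<Rightarrow> bool" where
  "entangled v \<longleftrightarrow> concurrence v > 0"

definition antiparallel :: "complex \<Rightarrow> complex \<Rightarrow> bool" where
  "antiparallel z1 z2 \<longleftrightarrow> (\<exists>a::real. a < 0 \<and> z1 = complex_of_real a * z2)"

definition eigenvalue :: "complex^'n^'n \<Rightarrow> complex \<Rightarrow> bool" where
  "eigenvalue M z \<longleftrightarrow> (\<exists>v. v \<noteq> 0 \<and> M *v v = z *s v)"

definition has_two_antiparallel_eigenvalues :: "complex^2^2 \<Rightarrow> bool" where
  "has_two_antiparallel_eigenvalues M \<longleftrightarrow>
     (\<exists>z1 z2. z1 \<noteq> z2 \<and> eigenvalue M z1 \<and> eigenvalue M z2 \<and> antiparallel z1 z2)"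

definition separable_op :: "qop \<Rightarrow> bool" where
  "separable_op P \<longleftrightarrow> (\<exists>n::nat. \<exists>c a b.
     (\<forall>k<n. c k \<ge> (0::real) \<and> unit_vec (a k) \<and> unit_vec (b k)) \<and>
     P = (\<Sum>k<n. c k *\<^sub>R kron (outer (a k) (a k)) (outer (b k) (b k))))"

definition orth_compl :: "qstate set \<Rightarrow> qstate set" where
  "orth_compl S = {x. \<forall>y\<in>S. cinner y x = 0}"

definition is_orth_projector :: "qstate set \<Rightarrow> qop \<Rightarrow> bool" where
  "is_orth_projector S P \<longleftrightarrow>
     (\<forall>x\<in>S. P *v x = x) \<and> (\<forall>x\<in>orth_compl S. P *v x = 0)"

end

theory Submission
  imports Defs
begin

text \<open>
  A separable projector is a nonnegative combination of product projectors
  \<open>|a\<^sub>k b\<^sub>k\<rangle>\<langle>a\<^sub>k b\<^sub>k|\<close>. The product vectors of positive weight lie in \<open>S\<close> and span it, so \<open>S\<close> is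
  spanned by two of them, \<open>a\<otimes>b\<close> and \<open>c\<otimes>d\<close>. If \<open>a \<parallel> c\<close> (or \<open>b \<parallel> d\<close>), then \<open>S = a\<otimes>\<complex>\<^sup>2\<close>
  (or \<open>\<complex>\<^sup>2\<otimes>b\<close>), which has an obvious orthonormal product basis. Otherwise the only product vectors
  in \<open>S\<close> are multiples of \<open>a\<otimes>b\<close> and \<open>c\<otimes>d\<close>, so \<open>P\<close> is a combination of the two rank-one maps
  \<open>|a\<otimes>b\<rangle>\<langle>a\<otimes>b|\<close>, \<open>|c\<otimes>d\<rangle>\<langle>c\<otimes>d|\<close>, and \<open>P\<close> fixing both vectors forces them to be orthogonal.

  For the second part let \<open>M\<close>, \<open>N\<close> be the matrices of \<open>\<psi>\<close>, \<open>\<Phi>\<close>, and \<open>a'\<close> the entrywise conjugate of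
  \<open>a\<close>. Orthogonality of the basis means \<open>\<langle>a,c\<rangle> = 0\<close> or \<open>\<langle>b,d\<rangle> = 0\<close>. In the first case
  \<open>\<langle>b, M a'\<rangle> = \<surd>2 \<langle>a\<otimes>b, \<psi>\<rangle>\<close> shows that \<open>M a'\<close> and \<open>N a'\<close> are both orthogonal to \<open>b\<close>, hence
  \<open>M a' = l N a'\<close>, and likewise \<open>M c' = m N c'\<close>; so \<open>l\<close>, \<open>m\<close> are eigenvalues of \<open>M N\<inverse>\<close> and
  \<open>det M = l m det N\<close>. Expanding the Hilbert-Schmidt form of the orthonormality of \<open>\<psi>\<close>, \<open>\<Phi>\<close> in the
  orthonormal basis \<open>a'\<close>, \<open>c'\<close> gives \<open>l \<parallel>N a'\<parallel>\<^sup>2 + m \<parallel>N c'\<parallel>\<^sup>2 = 0\<close> and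
  \<open>|l|\<^sup>2 \<parallel>N a'\<parallel>\<^sup>2 + |m|\<^sup>2 \<parallel>N c'\<parallel>\<^sup>2 = \<parallel>N a'\<parallel>\<^sup>2 + \<parallel>N c'\<parallel>\<^sup>2\<close>, whence \<open>l\<close>, \<open>m\<close> are antiparallel and
  \<open>|l m| = 1\<close>. The case \<open>\<langle>b,d\<rangle> = 0\<close> is the same argument for the transposed matrices.
\<close>

lemma UNIV_2x2: "(UNIV::(2\<times>2) set) = {(1,1), (1,2), (2,1), (2,2)}"
  using exhaust_2 by auto

lemma sum_UNIV_2x2: "sum f (UNIV::(2\<times>2) set) = f (1,1) + f (1,2) + f (2,1) + f (2,2)"
  by (simp add: UNIV_2x2 add.assoc)

lemma vec_eq_iff_2: "(x::'a^2) = y \<longleftrightarrow> x$1 = y$1 \<and> x$2 = y$2"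
  by (simp add: vec_eq_iff forall_2)

lemma vec_eq_iff_2x2:
  "(x::'a^(2\<times>2)) = y \<longleftrightarrow>
     x$(1,1) = y$(1,1) \<and> x$(1,2) = y$(1,2) \<and> x$(2,1) = y$(2,1) \<and> x$(2,2) = y$(2,2)"
  by (simp add: vec_eq_iff split_paired_All forall_2)

lemma cinner_2: "cinner (x::complex^2) y = cnj (x$1) * y$1 + cnj (x$2) * y$2"
  by (simp add: cinner_def sum_2)

lemma cinner_commute: "cinner y x = cnj (cinner x y)"
  by (simp add: cinner_def mult.commute)

lemma cinner_add_left: "cinner (x + y) z = cinner x z + cinner y z"
  by (simp add: cinner_def sum.distrib algebra_simps)

lemma cinner_scale_left: "cinner (c *s x) y = cnj c * cinner x y"
  by (simp add: cinner_def sum_distrib_left algebra_simps)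

lemma cinner_scale_right: "cinner x (c *s y) = c * cinner x y"
  by (simp add: cinner_def sum_distrib_left algebra_simps)

lemma scaleR_eq_scale: "r *\<^sub>R (x::complex^'n) = complex_of_real r *s x"
  by (simp add: vec_eq_iff) (simp add: scaleR_conv_of_real)

lemma cinner_scaleR_right: "cinner x (r *\<^sub>R y) = complex_of_real r * cinner x y"
  by (simp add: scaleR_eq_scale cinner_scale_right)

lemma cinner_sum_right: "cinner z (\<Sum>k\<in>A. f k) = (\<Sum>k\<in>A. cinner z (f k))"
  unfolding cinner_def sum_component sum_distrib_left by (rule sum.swap)

lemma inner_vec_eq_Re_cinner: "inner (x::complex^'n) y = Re (cinner x y)"
  by (simp add: inner_vec_def cinner_def inner_complex_def)

lemma cinner_self_eq_norm: "cinner x x = complex_of_real ((norm x)\<^sup>2)"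
proof -
  have "Im (cinner x x) = 0"
    using cinner_commute[of x x] by (simp add: complex_eq_iff)
  then show ?thesis
    by (simp add: complex_eq_iff power2_norm_eq_inner inner_vec_eq_Re_cinner)
qed

lemma cinner_self_eq_0_iff: "cinner x x = 0 \<longleftrightarrow> x = 0"
  by (simp add: cinner_self_eq_norm)

lemma cinner_tensor: "cinner (tensor a b) (tensor c d) = cinner a c * cinner b d"
  by (simp add: cinner_def sum_2 sum_UNIV_2x2 tensor_def algebra_simps)

lemma unit_vec_nonzero: "unit_vec x \<Longrightarrow> x \<noteq> 0"
  by (auto simp: unit_vec_def cinner_def)

lemma unit_vec_tensor: "unit_vec a \<Longrightarrow> unit_vec b \<Longrightarrow> unit_vec (tensor a b)"
  by (simp add: unit_vec_def cinner_tensor)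

definition conj_vec :: "complex^'n \<Rightarrow> complex^'n" where
  "conj_vec a = (\<chi> i. cnj (a$i))"

lemma cinner_conj_vec: "cinner (conj_vec a) (conj_vec c) = cnj (cinner a c)"
  by (simp add: cinner_def conj_vec_def mult.commute)

lemma unit_vec_conj_vec: "unit_vec (conj_vec a) \<longleftrightarrow> unit_vec a"
  by (metis cinner_conj_vec complex_cnj_one_iff unit_vec_def)

lemma sqrt2_mult_sqrt2: "complex_of_real (sqrt 2) * (complex_of_real (sqrt 2) * x) = 2 * x"
proof -
  have "complex_of_real (sqrt 2) * complex_of_real (sqrt 2) = complex_of_real (sqrt 2 * sqrt 2)"
    by (simp only: of_real_mult)
  then show ?thesis by (simp add: mult.assoc[symmetric])
qed

lemma kron_one_mult_Psi_plus:
  "kron (mat 1) M *v Psi_plus = (\<chi> p. M $ snd p $ fst p / complex_of_real (sqrt 2))"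
  unfolding vec_eq_iff_2x2
  by (simp add: matrix_vector_mult_def sum_UNIV_2x2 kron_def mat_def Psi_plus_def tensor_def axis_def)

lemma state_mat_eq: "state_mat v = (\<chi> j i. complex_of_real (sqrt 2) * v $ (i, j))"
  unfolding state_mat_def
proof (rule the_equality)
  show "kron (mat 1) (\<chi> j i. complex_of_real (sqrt 2) * v $ (i, j)) *v Psi_plus = v"
    unfolding kron_one_mult_Psi_plus vec_eq_iff_2x2 by simp
next
  fix M assume "kron (mat 1) M *v Psi_plus = v"
  then have "v $ (i, j) = M $ j $ i / complex_of_real (sqrt 2)" for i j
    unfolding kron_one_mult_Psi_plus by (auto simp: vec_eq_iff)
  then show "M = (\<chi> j i. complex_of_real (sqrt 2) * v $ (i, j))"
    by (simp add: vec_eq_iff)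
qed

lemma state_mat_nth: "state_mat v $ j $ i = complex_of_real (sqrt 2) * v $ (i, j)"
  by (simp add: state_mat_eq)

lemma cinner_state_mat_conj_vec:
  "cinner b (state_mat v *v conj_vec a) = complex_of_real (sqrt 2) * cinner (tensor a b) v"
  by (simp add: cinner_def sum_2 sum_UNIV_2x2 state_mat_nth conj_vec_def matrix_vector_mult_def
      tensor_def algebra_simps)

lemma cinner_transpose_state_mat_conj_vec:
  "cinner a (transpose (state_mat v) *v conj_vec b) = complex_of_real (sqrt 2) * cinner (tensor a b) v"
  by (simp add: cinner_def sum_2 sum_UNIV_2x2 state_mat_nth conj_vec_def matrix_vector_mult_def
      tensor_def transpose_def algebra_simps)

definition hs_inner :: "complex^'n^'m \<Rightarrow> complex^'n^'m \<Rightarrow> complex" where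
  "hs_inner X Y = (\<Sum>i\<in>UNIV. \<Sum>j\<in>UNIV. cnj (X$i$j) * Y$i$j)"

lemma hs_inner_state_mat: "hs_inner (state_mat u) (state_mat v) = 2 * cinner u v"
proof -
  have sqrt2: "complex_of_real (sqrt 2) * x * (complex_of_real (sqrt 2) * y) = 2 * (x * y)" for x y
    by (metis mult.assoc mult.left_commute sqrt2_mult_sqrt2)
  show ?thesis
    by (simp add: hs_inner_def cinner_def sum_2 sum_UNIV_2x2 state_mat_nth sqrt2)
qed

lemma hs_inner_transpose: "hs_inner (transpose X) (transpose Y) = hs_inner X Y"
  unfolding hs_inner_def transpose_def vec_lambda_beta by (rule sum.swap)

definition wedge :: "'a::comm_ring_1 ^ 2 \<Rightarrow> 'a ^ 2 \<Rightarrow> 'a" where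
  "wedge x y = x$1 * y$2 - x$2 * y$1"

lemma wedge_matrix_vector_mult: "wedge (A *v x) (A *v y) = det A * wedge x y"
  unfolding wedge_def det_2 by (simp add: matrix_vector_mult_def sum_2 algebra_simps)

lemma wedge_scale: "wedge (l *s x) (m *s y) = l * m * wedge x y"
  unfolding wedge_def by (simp add: algebra_simps)

lemma eq_cinner_scale_if_wedge_eq_0:
  assumes "unit_vec a" and "wedge a c = 0"
  shows "c = cinner a c *s a"
proof -
  have h1: "cnj (a$1) * a$1 + cnj (a$2) * a$2 = 1" using assms(1) by (simp add: unit_vec_def cinner_2)
  have h2: "a$1 * c$2 - a$2 * c$1 = 0" using assms(2) by (simp add: wedge_def)
  have "c$1 = (cnj (a$1) * c$1 + cnj (a$2) * c$2) * a$1" using h1 h2 by algebra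
  moreover have "c$2 = (cnj (a$1) * c$1 + cnj (a$2) * c$2) * a$2" using h1 h2 by algebra
  ultimately show ?thesis by (simp add: vec_eq_iff_2 cinner_2 ring_distribs)
qed

lemma orthonormal_2_completeness:
  fixes p q :: "complex^2"
  assumes "unit_vec p" and "unit_vec q" and "cinner p q = 0"
  shows "p$1 * cnj (p$1) + q$1 * cnj (q$1) = 1" and "p$1 * cnj (p$2) + q$1 * cnj (q$2) = 0"
    and "p$2 * cnj (p$1) + q$2 * cnj (q$1) = 0" and "p$2 * cnj (p$2) + q$2 * cnj (q$2) = 1"
proof -
  have "cnj (p$1) * p$1 + cnj (p$2) * p$2 = 1" and "cnj (q$1) * q$1 + cnj (q$2) * q$2 = 1"
    using assms(1,2) by (simp_all add: unit_vec_def cinner_2)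
  moreover have "cnj (p$1) * q$1 + cnj (p$2) * q$2 = 0" using assms(3) by (simp add: cinner_2)
  moreover from this have "cnj (q$1) * p$1 + cnj (q$2) * p$2 = 0"
    by (metis complex_cnj_add complex_cnj_cnj complex_cnj_mult complex_cnj_zero mult.commute)
  ultimately show "p$1 * cnj (p$1) + q$1 * cnj (q$1) = 1" and "p$1 * cnj (p$2) + q$1 * cnj (q$2) = 0"
    and "p$2 * cnj (p$1) + q$2 * cnj (q$1) = 0" and "p$2 * cnj (p$2) + q$2 * cnj (q$2) = 1"
    by algebra+
qed

lemma hs_inner_orthonormal_2:
  fixes p q :: "complex^2" and X Y :: "complex^2^2"
  assumes "unit_vec p" and "unit_vec q" and "cinner p q = 0"
  shows "hs_inner X Y = cinner (X *v p) (Y *v p) + cinner (X *v q) (Y *v q)"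
proof -
  note completeness = orthonormal_2_completeness[OF assms]
  show ?thesis
    unfolding hs_inner_def cinner_2 sum_2
    by (simp add: matrix_vector_mult_def sum_2) (use completeness in algebra)
qed

lemma wedge_Lagrange_identity:
  "cnj (wedge p q) * wedge p q = cinner p p * cinner q q - cinner p q * cinner q p"
  by (simp add: wedge_def cinner_2 algebra_simps)

lemma wedge_orthonormal_nonzero:
  assumes "unit_vec p" and "unit_vec q" and "cinner p q = 0"
  shows "wedge p q \<noteq> 0"
  using wedge_Lagrange_identity[of p q] assms by (auto simp: unit_vec_def)

lemma collinear_if_orthogonal_to_same:
  fixes r x y :: "complex^2"
  assumes "r \<noteq> 0" and "cinner r x = 0" and "cinner r y = 0" and "y \<noteq> 0"
  shows "\<exists>l. x = l *s y"
proof -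
  have "cnj (r$1) * wedge x y = 0" and "cnj (r$2) * wedge x y = 0"
    using assms(2,3) unfolding cinner_2 wedge_def by algebra+
  moreover have "r$1 \<noteq> 0 \<or> r$2 \<noteq> 0" using assms(1) by (auto simp: vec_eq_iff_2)
  ultimately have D: "x$1 * y$2 = x$2 * y$1" by (auto simp: wedge_def)
  show ?thesis
  proof (cases "y$2 = 0")
    case True
    then have "y$1 \<noteq> 0" using assms(4) by (auto simp: vec_eq_iff_2)
    then show ?thesis using D True
      by (intro exI[of _ "x$1/y$1"]) (auto simp: vec_eq_iff_2 field_simps)
  next
    case False
    then show ?thesis using D
      by (intro exI[of _ "x$2/y$2"]) (auto simp: vec_eq_iff_2 field_simps)
  qed
qed

lemma matrix_vector_mul_mat: "mat z *v v = z *s (v::'a::semiring_1^'n)"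
  by (simp add: vec_eq_iff matrix_vector_mult_def mat_def if_distrib if_distribR
      cong del: if_weak_cong)

lemma matrix_mul_mat_commute: "mat z ** A = A ** (mat z :: 'a::comm_semiring_1^'n^'n)"
  by (simp add: vec_eq_iff matrix_matrix_mult_def mat_def if_distrib if_distribR mult.commute
      cong del: if_weak_cong)

lemma not_invertible_iff_kernel:
  fixes A :: "'a::field^'n^'n"
  shows "\<not> invertible A \<longleftrightarrow> (\<exists>v. v \<noteq> 0 \<and> A *v v = 0)"
  unfolding invertible_left_inverse matrix_left_invertible_ker by auto

lemma matrix_inv_mult_self: "invertible N \<Longrightarrow> matrix_inv N ** N = mat 1"
  unfolding invertible_def matrix_inv_def by (rule someI2_ex) auto

text \<open>Generalized eigenvalues of the pencil \<open>(M, N)\<close>. For invertible \<open>N\<close> they are eigenvalues of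
  \<open>M N\<inverse>\<close>, and unlike the latter they are visibly invariant under transposing both matrices.\<close>

definition generalized_eigenvalue :: "complex^'n^'n \<Rightarrow> complex^'n^'n \<Rightarrow> complex \<Rightarrow> bool" where
  "generalized_eigenvalue M N z \<longleftrightarrow> (\<exists>v. v \<noteq> 0 \<and> M *v v = z *s (N *v v))"

definition has_two_antiparallel_generalized_eigenvalues ::
    "complex^'n^'n \<Rightarrow> complex^'n^'n \<Rightarrow> bool" where
  "has_two_antiparallel_generalized_eigenvalues M N \<longleftrightarrow>
     (\<exists>z1 z2. z1 \<noteq> z2 \<and> generalized_eigenvalue M N z1 \<and> generalized_eigenvalue M N z2
        \<and> antiparallel z1 z2)"

lemma generalized_eigenvalue_iff_det:
  "generalized_eigenvalue M N z \<longleftrightarrow> det (M - mat z ** N) = 0"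
proof -
  have "(M - mat z ** N) *v v = M *v v - z *s (N *v v)" for v
    by (simp add: matrix_vector_mult_diff_rdistrib matrix_vector_mul_mat flip: matrix_vector_mul_assoc)
  then have "generalized_eigenvalue M N z \<longleftrightarrow> \<not> invertible (M - mat z ** N)"
    unfolding generalized_eigenvalue_def not_invertible_iff_kernel by simp
  then show ?thesis by (simp add: invertible_det_nz)
qed

lemma generalized_eigenvalue_transpose:
  "generalized_eigenvalue (transpose M) (transpose N) z \<longleftrightarrow> generalized_eigenvalue M N z"
proof -
  have "transpose (M - mat z ** N) = transpose M - transpose (mat z ** N)"
    by (simp add: vec_eq_iff transpose_def)
  also have "transpose (mat z ** N) = mat z ** transpose N"
    by (simp add: matrix_transpose_mul matrix_mul_mat_commute)
  finally have "det (transpose M - mat z ** transpose N) = det (M - mat z ** N)"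
    by (metis det_transpose)
  then show ?thesis
    unfolding generalized_eigenvalue_iff_det by simp
qed

lemma eigenvalue_mult_matrix_inv:
  assumes "invertible N" and "generalized_eigenvalue M N z"
  shows "eigenvalue (M ** matrix_inv N) z"
proof -
  obtain v where "v \<noteq> 0" and v: "M *v v = z *s (N *v v)"
    using assms(2) unfolding generalized_eigenvalue_def by blast
  then have "N *v v \<noteq> 0"
    using assms(1) not_invertible_iff_kernel by blast
  moreover have "(M ** matrix_inv N) *v (N *v v) = z *s (N *v v)"
    using v assms(1)
    by (simp add: matrix_vector_mul_assoc matrix_inv_mult_self flip: matrix_mul_assoc)
  ultimately show ?thesis unfolding eigenvalue_def by blast
qed

lemma has_two_antiparallel_generalized_eigenvalues_transpose:
  "has_two_antiparallel_generalized_eigenvalues (transpose M) (transpose N)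
     \<longleftrightarrow> has_two_antiparallel_generalized_eigenvalues M N"
  by (simp add: has_two_antiparallel_generalized_eigenvalues_def generalized_eigenvalue_transpose)

lemma has_two_antiparallel_eigenvalues_mult_matrix_inv:
  fixes M N :: "complex^2^2"
  assumes "invertible N" and "has_two_antiparallel_generalized_eigenvalues M N"
  shows "has_two_antiparallel_eigenvalues (M ** matrix_inv N)"
  using assms eigenvalue_mult_matrix_inv
  unfolding has_two_antiparallel_generalized_eigenvalues_def has_two_antiparallel_eigenvalues_def
  by blast

lemma antiparallel_if_weighted_balance:
  fixes l m :: complex and P Q :: real
  assumes P: "P > 0" and Q: "Q > 0"
    and lin: "l * complex_of_real P + m * complex_of_real Q = 0"
    and quad: "(cmod l)\<^sup>2 * P + (cmod m)\<^sup>2 * Q = P + Q"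
  shows "l \<noteq> m \<and> antiparallel l m \<and> cmod l * cmod m = 1"
proof -
  have l: "l = complex_of_real (- Q / P) * m"
    using lin P by (simp add: field_simps eq_neg_iff_add_eq_0)
  have norm_l: "cmod l = Q / P * cmod m"
    unfolding l norm_mult norm_of_real using P Q by simp
  have "((cmod m)\<^sup>2 * Q / P - 1) * (P + Q) = 0"
    using quad P unfolding norm_l by (simp add: field_simps power2_eq_square)
  then have "(cmod m)\<^sup>2 * Q / P = 1"
    using P Q by auto
  then have prod: "cmod l * cmod m = 1"
    unfolding norm_l using P Q by (auto simp: power2_eq_square mult_ac)
  then have "m \<noteq> 0" by auto
  moreover have "complex_of_real (- Q / P) \<noteq> 1"
    using P Q by (simp add: field_simps)
  ultimately have "l \<noteq> m" unfolding l by (metis mult.left_neutral mult_cancel_right)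
  moreover have "antiparallel l m"
    unfolding antiparallel_def using l P Q by (intro exI[of _ "- Q / P"]) simp
  ultimately show ?thesis using prod by blast
qed

lemma det_eq_if_scaled_on_basis:
  fixes M N :: "'a::idom^2^2"
  assumes "wedge p q \<noteq> 0" and "M *v p = l *s (N *v p)" and "M *v q = m *s (N *v q)"
  shows "det M = l * m * det N"
proof -
  have "det M * wedge p q = l * m * det N * wedge p q"
    using wedge_matrix_vector_mult[of M p q] wedge_matrix_vector_mult[of N p q]
    unfolding assms(2,3) wedge_scale by (auto simp: mult.assoc)
  then show ?thesis using assms(1) by simp
qed

lemma antiparallel_generalized_eigenvalues_and_abs_det_eq:
  fixes M N :: "complex^2^2" and p q r s :: "complex^2"
  assumes detN: "det N \<noteq> 0"
    and p: "unit_vec p" and q: "unit_vec q" and pq: "cinner p q = 0"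
    and r: "r \<noteq> 0" and rM: "cinner r (M *v p) = 0" and rN: "cinner r (N *v p) = 0"
    and s: "s \<noteq> 0" and sM: "cinner s (M *v q) = 0" and sN: "cinner s (N *v q) = 0"
    and NM: "hs_inner N M = 0" and MM: "hs_inner M M = hs_inner N N"
  shows "has_two_antiparallel_generalized_eigenvalues M N \<and> cmod (det M) = cmod (det N)"
proof -
  have "invertible N" using detN by (simp add: invertible_det_nz)
  moreover have "p \<noteq> 0" and "q \<noteq> 0" using p q by (simp_all add: unit_vec_nonzero)
  ultimately have Np: "N *v p \<noteq> 0" and Nq: "N *v q \<noteq> 0"
    using not_invertible_iff_kernel by blast+
  obtain l where l: "M *v p = l *s (N *v p)"
    using collinear_if_orthogonal_to_same[OF r rM rN Np] by blast
  obtain m where m: "M *v q = m *s (N *v q)"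
    using collinear_if_orthogonal_to_same[OF s sM sN Nq] by blast
  define P where "P = (norm (N *v p))\<^sup>2"
  define Q where "Q = (norm (N *v q))\<^sup>2"
  have "P > 0" "Q > 0" using Np Nq by (simp_all add: P_def Q_def)
  have hs: "hs_inner X Y = cinner (X *v p) (Y *v p) + cinner (X *v q) (Y *v q)"
    for X Y :: "complex^2^2"
    by (rule hs_inner_orthonormal_2[OF p q pq])
  have "l * complex_of_real P + m * complex_of_real Q = 0"
    using NM unfolding hs l m cinner_scale_right cinner_self_eq_norm P_def Q_def .
  moreover have "(cmod l)\<^sup>2 * P + (cmod m)\<^sup>2 * Q = P + Q"
  proof -
    have "hs_inner M M = cnj l * l * cinner (N *v p) (N *v p) + cnj m * m * cinner (N *v q) (N *v q)"
      unfolding hs l m cinner_scale_left cinner_scale_right by (simp add: algebra_simps)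
    also have "\<dots> = complex_of_real ((cmod l)\<^sup>2 * P + (cmod m)\<^sup>2 * Q)"
      unfolding cinner_self_eq_norm P_def Q_def
      by (simp add: complex_norm_square mult.commute del: of_real_power)
    moreover have "hs_inner N N = complex_of_real (P + Q)"
      unfolding hs cinner_self_eq_norm P_def Q_def by simp
    ultimately show ?thesis using MM by (metis of_real_eq_iff)
  qed
  ultimately have lm: "l \<noteq> m \<and> antiparallel l m \<and> cmod l * cmod m = 1"
    using antiparallel_if_weighted_balance \<open>P > 0\<close> \<open>Q > 0\<close> by blast
  have "det M = l * m * det N"
    using det_eq_if_scaled_on_basis[OF wedge_orthonormal_nonzero[OF p q pq] l m] .
  then have "cmod (det M) = cmod (det N)"
    using lm by (simp add: norm_mult)
  moreover have "generalized_eigenvalue M N l" "generalized_eigenvalue M N m"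
    using l m \<open>p \<noteq> 0\<close> \<open>q \<noteq> 0\<close> unfolding generalized_eigenvalue_def by blast+
  ultimately show ?thesis
    using lm unfolding has_two_antiparallel_generalized_eigenvalues_def by blast
qed

lemma antiparallel_eigenvalues_if_orthogonal_to_product_pair:
  fixes a b c d :: qubit and \<psi> \<Phi> :: qstate
  assumes a: "unit_vec a" and b: "unit_vec b" and c: "unit_vec c" and d: "unit_vec d"
    and abcd: "cinner (tensor a b) (tensor c d) = 0"
    and \<psi>: "cinner (tensor a b) \<psi> = 0" "cinner (tensor c d) \<psi> = 0"
    and \<Phi>: "cinner (tensor a b) \<Phi> = 0" "cinner (tensor c d) \<Phi> = 0"
    and unit: "unit_vec \<psi>" "unit_vec \<Phi>" and orth: "cinner \<psi> \<Phi> = 0"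
    and ent: "entangled \<psi>" "entangled \<Phi>"
  shows "has_two_antiparallel_eigenvalues (state_mat \<psi> ** matrix_inv (state_mat \<Phi>))
         \<and> concurrence \<psi> = concurrence \<Phi>"
proof -
  define M where "M = state_mat \<psi>"
  define N where "N = state_mat \<Phi>"
  have detN: "det N \<noteq> 0" using ent(2) by (simp add: N_def entangled_def concurrence_def)
  have NM: "hs_inner N M = 0"
    using orth cinner_commute[of \<Phi> \<psi>] by (simp add: M_def N_def hs_inner_state_mat)
  have MM: "hs_inner M M = hs_inner N N"
    using unit by (simp add: M_def N_def hs_inner_state_mat unit_vec_def)
  have "has_two_antiparallel_generalized_eigenvalues M N \<and> cmod (det M) = cmod (det N)"
  proof (cases "cinner a c = 0")
    case True
    show ?thesis
    proof (rule antiparallel_generalized_eigenvalues_and_abs_det_eq[OF detN])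
      show "unit_vec (conj_vec a)" "unit_vec (conj_vec c)"
        using a c by (simp_all add: unit_vec_conj_vec)
      show "cinner (conj_vec a) (conj_vec c) = 0" using True by (simp add: cinner_conj_vec)
      show "cinner b (M *v conj_vec a) = 0" "cinner b (N *v conj_vec a) = 0"
        "cinner d (M *v conj_vec c) = 0" "cinner d (N *v conj_vec c) = 0"
        using \<psi> \<Phi> by (simp_all add: M_def N_def cinner_state_mat_conj_vec)
    qed (use b d NM MM in \<open>simp_all add: unit_vec_nonzero\<close>)
  next
    case False
    then have "cinner b d = 0" using abcd by (simp add: cinner_tensor)
    have "has_two_antiparallel_generalized_eigenvalues (transpose M) (transpose N)
          \<and> cmod (det (transpose M)) = cmod (det (transpose N))"
    proof (rule antiparallel_generalized_eigenvalues_and_abs_det_eq)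
      show "unit_vec (conj_vec b)" "unit_vec (conj_vec d)"
        using b d by (simp_all add: unit_vec_conj_vec)
      show "cinner (conj_vec b) (conj_vec d) = 0"
        using \<open>cinner b d = 0\<close> by (simp add: cinner_conj_vec)
      show "cinner a (transpose M *v conj_vec b) = 0" "cinner a (transpose N *v conj_vec b) = 0"
        "cinner c (transpose M *v conj_vec d) = 0" "cinner c (transpose N *v conj_vec d) = 0"
        unfolding M_def N_def cinner_transpose_state_mat_conj_vec using \<psi> \<Phi> by simp_all
    qed (use a c detN NM MM in \<open>simp_all add: unit_vec_nonzero hs_inner_transpose\<close>)
    then show ?thesis by (simp add: has_two_antiparallel_generalized_eigenvalues_transpose)
  qed
  then show ?thesis
    using has_two_antiparallel_eigenvalues_mult_matrix_inv detN
    unfolding concurrence_def M_def N_def by (simp add: invertible_det_nz)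
qed

lemma outer_mult_vec: "outer x y *v v = cinner y v *s x"
  by (simp add: vec_eq_iff matrix_vector_mult_def outer_def cinner_def sum_distrib_left
      algebra_simps)

lemma kron_outer_outer: "kron (outer a a) (outer b b) = outer (tensor a b) (tensor a b)"
  by (simp add: vec_eq_iff kron_def outer_def tensor_def algebra_simps)

lemma scaleR_matrix_vector_mult: "(r *\<^sub>R (A::complex^'n^'m)) *v v = r *\<^sub>R (A *v v)"
  by (simp add: vec_eq_iff matrix_vector_mult_def scaleR_sum_right)

lemma sum_matrix_vector_mult: "(\<Sum>k\<in>K. A k) *v v = (\<Sum>k\<in>K. A k *v v)"
  by (induction K rule: infinite_finite_induct) (simp_all add: matrix_vector_mult_add_rdistrib)

lemma separable_opE:
  assumes "separable_op P"
  obtains n :: nat and c :: "nat \<Rightarrow> real" and a b :: "nat \<Rightarrow> qubit"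
  where "\<And>k. k < n \<Longrightarrow> c k \<ge> 0 \<and> unit_vec (a k) \<and> unit_vec (b k)"
    and "\<And>v. P *v v = (\<Sum>k<n. c k *\<^sub>R (cinner (tensor (a k) (b k)) v *s tensor (a k) (b k)))"
proof -
  obtain n c a b where "\<forall>k<(n::nat). c k \<ge> (0::real) \<and> unit_vec (a k) \<and> unit_vec (b k)"
    and P: "P = (\<Sum>k<n. c k *\<^sub>R kron (outer (a k) (a k)) (outer (b k) (b k)))"
    using assms unfolding separable_op_def by blast
  then show ?thesis
    by (intro that[of n c a b])
      (simp_all add: sum_matrix_vector_mult scaleR_matrix_vector_mult kron_outer_outer outer_mult_vec)
qed

lemma orth_compl_decomposition:
  assumes "vec.subspace S"
  obtains y z where "y \<in> S" and "z \<in> orth_compl S" and "x = y + z"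
proof -
  have real_subspace: "subspace S"
    using assms unfolding subspace_def vec.subspace_def by (simp add: scaleR_eq_scale)
  then obtain y z where y: "y \<in> S" and z: "\<And>w. w \<in> S \<Longrightarrow> orthogonal z w" and "x = y + z"
    using orthogonal_subspace_decomp_exists[of S x] by (metis span_eq_iff)
  moreover have "z \<in> orth_compl S"
    unfolding orth_compl_def
  proof (intro CollectI ballI)
    fix w assume w: "w \<in> S"
    moreover have "\<i> *s w \<in> S" using assms w by (simp add: vec.subspace_def)
    ultimately have "Re (cinner z w) = 0" and "Re (cinner z (\<i> *s w)) = 0"
      using z by (simp_all add: orthogonal_def inner_vec_eq_Re_cinner)
    then have "cinner z w = 0" by (simp add: cinner_scale_right complex_eq_iff)
    then show "cinner w z = 0" by (simp add: cinner_commute[of w z])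
  qed
  ultimately show ?thesis using that by blast
qed

lemma mem_if_positive_weight:
  fixes x :: "nat \<Rightarrow> qstate"
  assumes "vec.subspace S" and "is_orth_projector S P"
    and P: "\<And>v. P *v v = (\<Sum>k<n. c k *\<^sub>R (cinner (x k) v *s x k))"
    and c: "\<And>k. k < n \<Longrightarrow> c k \<ge> 0"
    and k: "k < n" "c k > 0"
  shows "x k \<in> S"
proof -
  obtain y z where y: "y \<in> S" and z: "z \<in> orth_compl S" and xk: "x k = y + z"
    using orth_compl_decomposition[OF assms(1)] by blast
  have weights: "complex_of_real (\<Sum>j<n. c j * (cmod (cinner (x j) z))\<^sup>2) = cinner z (P *v z)"
    unfolding P cinner_sum_right cinner_scaleR_right cinner_scale_right of_real_sum
  proof (rule sum.cong)
    fix j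
    show "complex_of_real (c j * (cmod (cinner (x j) z))\<^sup>2) = complex_of_real (c j) * (cinner (x j) z * cinner z (x j))"
      using complex_norm_square[of "cinner (x j) z"] cinner_commute[of z "x j"]
      by (simp del: of_real_power)
  qed simp
  also have "cinner z (P *v z) = 0"
    using z assms(2) by (simp add: is_orth_projector_def cinner_def)
  finally have "(\<Sum>j<n. c j * (cmod (cinner (x j) z))\<^sup>2) = 0"
    by (simp only: of_real_eq_0_iff)
  then have "\<forall>j\<in>{..<n}. c j * (cmod (cinner (x j) z))\<^sup>2 = 0"
    by (subst (asm) sum_nonneg_eq_0_iff) (auto intro!: mult_nonneg_nonneg c)
  then have "cinner (x k) z = 0" using k by force
  moreover have "cinner y z = 0" using y z by (simp add: orth_compl_def)
  ultimately have "z = 0"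
    unfolding xk cinner_add_left cinner_self_eq_0_iff[symmetric] by simp
  then show ?thesis using xk y by simp
qed

lemma span_pairE:
  assumes "v \<in> vec.span {u, w}"
  obtains \<alpha> \<beta> where "v = \<alpha> *s u + \<beta> *s w"
proof -
  obtain \<alpha> where "v - \<alpha> *s u \<in> vec.span {w}"
    using assms unfolding vec.span_insert by blast
  then obtain \<beta> where "v - \<alpha> *s u = \<beta> *s w"
    unfolding vec.span_singleton by blast
  then show ?thesis using that[of \<alpha> \<beta>] by (simp add: algebra_simps)
qed

lemma independent_pair_coeffs_eq_0:
  assumes "vec.independent {u, w}" and "u \<noteq> w" and "\<alpha> *s u + \<beta> *s w = 0"
  shows "\<alpha> = 0" and "\<beta> = 0"
proof -
  define f where "f v = (if v = u then \<alpha> else \<beta>)" for v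
  have "(\<Sum>v\<in>{u, w}. f v *s v) = 0" using assms(2,3) by (simp add: f_def)
  then have "\<forall>v\<in>{u, w}. f v = 0" using assms(1) unfolding vec.independent_explicit by blast
  then show "\<alpha> = 0" and "\<beta> = 0" using assms(2) by (auto simp: f_def)
qed

lemma span_eq_if_dim_2:
  assumes "vec.subspace S" and "vec.dim S = 2" and "S = vec.span {u, w}"
    and "u \<in> vec.span {e1, e2}" and "w \<in> vec.span {e1, e2}"
  shows "vec.span {e1, e2} = S"
proof -
  have "S \<subseteq> vec.span {e1, e2}"
    unfolding assms(3) using assms(4,5) by (intro vec.span_minimal) auto
  moreover have "vec.dim (vec.span {e1, e2}) \<le> 2"
    using vec.dim_le_card'[of "{e1, e2}"] by (auto simp: card_insert_if vec.dim_span split: if_splits)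
  ultimately show ?thesis
    using vec.subspace_dim_equal[OF assms(1) vec.subspace_span] assms(2) by metis
qed

lemma tensor_mem_span_axis_right: "tensor a b \<in> vec.span {tensor a (axis 1 1), tensor a (axis 2 1)}"
proof -
  have "tensor a b = b$1 *s tensor a (axis 1 1) + b$2 *s tensor a (axis 2 1)"
    by (simp add: vec_eq_iff_2x2 tensor_def axis_def)
  then show ?thesis
    by (metis vec.span_add vec.span_base vec.span_scale insertCI)
qed

lemma tensor_mem_span_axis_left: "tensor a b \<in> vec.span {tensor (axis 1 1) b, tensor (axis 2 1) b}"
proof -
  have "tensor a b = a$1 *s tensor (axis 1 1) b + a$2 *s tensor (axis 2 1) b"
    by (simp add: vec_eq_iff_2x2 tensor_def axis_def)
  then show ?thesis
    by (metis vec.span_add vec.span_base vec.span_scale insertCI)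
qed

lemma tensor_scale_left: "tensor (t *s a) b = tensor a (t *s b)"
  by (simp add: vec_eq_iff_2x2 tensor_def)

lemma unit_vec_axis: "unit_vec (axis (i::2) (1::complex))"
  using exhaust_2[of i] by (auto simp: unit_vec_def cinner_2 axis_def)

lemma cinner_axis_1_2: "cinner (axis 1 (1::complex)) (axis (2::2) 1) = 0"
  by (simp add: cinner_2 axis_def)

lemma span_tensor_axis_right_if_wedge_eq_0:
  assumes "vec.subspace S" and "vec.dim S = 2" and "S = vec.span {tensor a b, tensor c d}"
    and "unit_vec a" and "wedge a c = 0"
  shows "vec.span {tensor a (axis 1 1), tensor a (axis 2 1)} = S"
proof (rule span_eq_if_dim_2[OF assms(1-3) tensor_mem_span_axis_right])
  have "tensor c d = tensor (cinner a c *s a) d"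
    using eq_cinner_scale_if_wedge_eq_0[OF assms(4,5)] by (rule arg_cong)
  then have "tensor c d = tensor a (cinner a c *s d)"
    by (simp only: tensor_scale_left)
  then show "tensor c d \<in> vec.span {tensor a (axis 1 1), tensor a (axis 2 1)}"
    using tensor_mem_span_axis_right by simp
qed

lemma span_tensor_axis_left_if_wedge_eq_0:
  assumes "vec.subspace S" and "vec.dim S = 2" and "S = vec.span {tensor a b, tensor c d}"
    and "unit_vec b" and "wedge b d = 0"
  shows "vec.span {tensor (axis 1 1) b, tensor (axis 2 1) b} = S"
proof (rule span_eq_if_dim_2[OF assms(1-3) tensor_mem_span_axis_left])
  have "tensor c d = tensor c (cinner b d *s b)"
    using eq_cinner_scale_if_wedge_eq_0[OF assms(4,5)] by (rule arg_cong)
  then have "tensor c d = tensor (cinner b d *s c) b"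
    by (simp only: tensor_scale_left)
  then show "tensor c d \<in> vec.span {tensor (axis 1 1) b, tensor (axis 2 1) b}"
    using tensor_mem_span_axis_left by simp
qed

definition coeff_det :: "qstate \<Rightarrow> complex" where
  "coeff_det v = v$(1,1) * v$(2,2) - v$(1,2) * v$(2,1)"

lemma coeff_det_tensor: "coeff_det (tensor a b) = 0"
  by (simp add: coeff_det_def tensor_def algebra_simps)

lemma coeff_det_tensor_combination:
  "coeff_det (\<alpha> *s tensor a b + \<beta> *s tensor c d) = \<alpha> * \<beta> * wedge a c * wedge b d"
  unfolding coeff_det_def wedge_def tensor_def by simp algebra

lemma product_collinear_if_generic_pair:
  assumes "wedge a c \<noteq> 0" and "wedge b d \<noteq> 0"
    and "x \<in> vec.span {tensor a b, tensor c d}" and "coeff_det x = 0"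
  shows "(\<exists>\<alpha>. x = \<alpha> *s tensor a b) \<or> (\<exists>\<beta>. x = \<beta> *s tensor c d)"
proof -
  obtain \<alpha> \<beta> where x: "x = \<alpha> *s tensor a b + \<beta> *s tensor c d"
    using span_pairE[OF assms(3)] .
  then have "\<alpha> * \<beta> = 0"
    using assms(1,2,4) coeff_det_tensor_combination[of \<alpha> a b \<beta> c d] by simp
  then show ?thesis using x by auto
qed

lemma weighted_rank_one_sum_collapse:
  fixes n :: nat and c :: "nat \<Rightarrow> real" and x :: "nat \<Rightarrow> complex^'n"
  assumes "\<forall>k<n. c k \<noteq> 0 \<longrightarrow> (\<exists>\<alpha>. x k = \<alpha> *s u) \<or> (\<exists>\<alpha>. x k = \<alpha> *s w)"
  shows "\<exists>A B. \<forall>v. (\<Sum>k<n. c k *\<^sub>R (cinner (x k) v *s x k))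
                  = (A * cinner u v) *s u + (B * cinner w v) *s w"
  using assms
proof (induction n)
  case 0
  show ?case by (intro exI[of _ 0]) (simp add: vec_eq_iff)
next
  case (Suc n)
  then obtain A B where IH: "\<forall>v. (\<Sum>k<n. c k *\<^sub>R (cinner (x k) v *s x k))
                  = (A * cinner u v) *s u + (B * cinner w v) *s w" by auto
  have rank_one: "r *\<^sub>R (cinner (\<alpha> *s y) v *s (\<alpha> *s y))
      = (complex_of_real r * cnj \<alpha> * \<alpha> * cinner y v) *s y" for r \<alpha> and y v :: "complex^'n"
    by (simp add: scaleR_eq_scale cinner_scale_left vec_eq_iff algebra_simps)
  define S where "S v = (\<Sum>k<Suc n. c k *\<^sub>R (cinner (x k) v *s x k))" for v
  have S: "S v = (A * cinner u v) *s u + (B * cinner w v) *s w + c n *\<^sub>R (cinner (x n) v *s x n)"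
    for v
    using IH by (simp add: S_def)
  consider "c n = 0" | \<alpha> where "x n = \<alpha> *s u" | \<alpha> where "x n = \<alpha> *s w"
    using Suc.prems by blast
  then have "\<exists>A B. \<forall>v. S v = (A * cinner u v) *s u + (B * cinner w v) *s w"
  proof cases
    case 1
    then show ?thesis unfolding S by auto
  next
    case 2
    show ?thesis
      unfolding S 2 rank_one
      by (intro exI[of _ "A + complex_of_real (c n) * cnj \<alpha> * \<alpha>"] exI[of _ B] allI)
        (simp add: vec_eq_iff ring_distribs)
  next
    case 3
    show ?thesis
      unfolding S 3 rank_one
      by (intro exI[of _ A] exI[of _ "B + complex_of_real (c n) * cnj \<alpha> * \<alpha>"] allI)
        (simp add: vec_eq_iff ring_distribs)
  qed
  then show ?case unfolding S_def .
qed

lemma cinner_eq_0_if_projects_onto_pair: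
  fixes P :: "complex^'n^'n"
  assumes indep: "vec.independent {u, w}" and "u \<noteq> w"
    and P: "\<And>v. P *v v = (A * cinner u v) *s u + (B * cinner w v) *s w"
    and "P *v u = u" and "P *v w = w"
  shows "cinner u w = 0"
proof -
  have "(A * cinner u u) *s u + (B * cinner w u) *s w = u"
    using P[of u] assms(4) by simp
  then have "(A * cinner u u - 1) *s u + (B * cinner w u) *s w = 0"
    by (simp add: vec_eq_iff algebra_simps)
  then have "A * cinner u u - 1 = 0"
    by (rule independent_pair_coeffs_eq_0(1)[OF indep \<open>u \<noteq> w\<close>])
  then have "A \<noteq> 0" by auto
  have "(A * cinner u w) *s u + (B * cinner w w) *s w = w"
    using P[of w] assms(5) by simp
  then have "(A * cinner u w) *s u + (B * cinner w w - 1) *s w = 0"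
    by (simp add: vec_eq_iff algebra_simps)
  then have "A * cinner u w = 0"
    by (rule independent_pair_coeffs_eq_0(1)[OF indep \<open>u \<noteq> w\<close>])
  then show ?thesis using \<open>A \<noteq> 0\<close> by simp
qed

lemma span_positive_weight_eq:
  fixes x :: "nat \<Rightarrow> qstate"
  assumes sub: "vec.subspace S" and proj: "is_orth_projector S P"
    and P: "\<And>v. P *v v = (\<Sum>k<n. c k *\<^sub>R (cinner (x k) v *s x k))"
    and c: "\<And>k. k < n \<Longrightarrow> c k \<ge> 0"
  shows "S = vec.span (x ` {k. k < n \<and> c k > 0})" (is "S = vec.span ?X")
proof
  show "vec.span ?X \<subseteq> S"
    using mem_if_positive_weight[OF sub proj P c] by (intro vec.span_minimal[OF _ sub]) auto
  show "S \<subseteq> vec.span ?X"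
  proof
    fix v assume "v \<in> S"
    then have "v = P *v v" using proj by (simp add: is_orth_projector_def)
    also have "P *v v \<in> vec.span ?X"
      unfolding P
    proof (rule vec.span_sum)
      fix k assume k: "k \<in> {..<n}"
      show "c k *\<^sub>R (cinner (x k) v *s x k) \<in> vec.span ?X"
      proof (cases "c k = 0")
        case False
        then have "x k \<in> ?X" using c[of k] k by force
        then show ?thesis
          unfolding scaleR_eq_scale vec.scale_scale by (intro vec.span_scale vec.span_base)
      qed (simp add: vec.span_zero)
    qed
    finally show "v \<in> vec.span ?X" .
  qed
qed

lemma independent_pair_spanning:
  assumes "vec.dim S = 2" and "S = vec.span X"
  obtains u w where "u \<in> X" and "w \<in> X" and "u \<noteq> w" and "vec.independent {u, w}"
    and "S = vec.span {u, w}"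
proof -
  obtain B where "B \<subseteq> X" and "vec.independent B" and "X \<subseteq> vec.span B"
    using vec.maximal_independent_subset[of X] by blast
  moreover from this have "S = vec.span B"
    using assms(2) vec.span_mono vec.span_minimal[OF _ vec.subspace_span] by blast
  moreover from calculation have "card B = 2"
    using vec.dim_span_eq_card_independent assms(1) by metis
  ultimately show ?thesis
    using that by (metis card_2_iff insert_subset)
qed

lemma orthogonal_if_generic_product_pair:
  fixes x :: "nat \<Rightarrow> qstate" and a1 b1 a2 b2 :: qubit
  defines "u \<equiv> tensor a1 b1" and "w \<equiv> tensor a2 b2"
  assumes proj: "is_orth_projector S P"
    and P: "\<And>v. P *v v = (\<Sum>k<n. c k *\<^sub>R (cinner (x k) v *s x k))"
    and x: "\<And>k. k < n \<Longrightarrow> c k \<noteq> 0 \<Longrightarrow> x k \<in> S \<and> coeff_det (x k) = 0"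
    and S: "S = vec.span {u, w}" and indep: "vec.independent {u, w}" "u \<noteq> w"
    and generic: "wedge a1 a2 \<noteq> 0" "wedge b1 b2 \<noteq> 0"
  shows "cinner u w = 0"
proof -
  have "(\<exists>\<alpha>. x k = \<alpha> *s u) \<or> (\<exists>\<alpha>. x k = \<alpha> *s w)" if "k < n" "c k \<noteq> 0" for k
    using product_collinear_if_generic_pair[OF generic, of "x k"] x[OF that] S
    unfolding u_def w_def by blast
  then obtain A B where "\<And>v. P *v v = (A * cinner u v) *s u + (B * cinner w v) *s w"
    using weighted_rank_one_sum_collapse[of n c x u w] unfolding P by blast
  moreover have "P *v u = u" "P *v w = w"
    using proj S vec.span_base[of _ "{u, w}"] by (auto simp: is_orth_projector_def)
  ultimately show ?thesis
    using cinner_eq_0_if_projects_onto_pair indep by blast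
qed

lemma orthonormal_product_basis_if_separable_projector:
  fixes S :: "qstate set" and P :: qop
  assumes sub: "vec.subspace S" and dim: "vec.dim S = 2"
    and proj: "is_orth_projector S P" and sep: "separable_op P"
  shows "\<exists>a b c d. unit_vec a \<and> unit_vec b \<and> unit_vec c \<and> unit_vec d
           \<and> cinner (tensor a b) (tensor c d) = 0 \<and> vec.span {tensor a b, tensor c d} = S"
proof -
  obtain n :: nat and c a b where cab: "\<And>k. k < n \<Longrightarrow> c k \<ge> 0 \<and> unit_vec (a k) \<and> unit_vec (b k)"
    and P: "\<And>v. P *v v = (\<Sum>k<n. c k *\<^sub>R (cinner (tensor (a k) (b k)) v *s tensor (a k) (b k)))"
    using separable_opE[OF sep] by blast
  define x where "x k = tensor (a k) (b k)" for k
  note P = P[folded x_def]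
  have c: "\<And>k. k < n \<Longrightarrow> c k \<ge> 0" using cab by blast
  obtain u w where "u \<in> x ` {k. k < n \<and> c k > 0}" "w \<in> x ` {k. k < n \<and> c k > 0}"
    and uw: "u \<noteq> w" "vec.independent {u, w}" and S: "S = vec.span {u, w}"
    using independent_pair_spanning[OF dim span_positive_weight_eq[OF sub proj P c]] .
  then obtain k1 k2 where k1: "k1 < n" "u = x k1" and k2: "k2 < n" "w = x k2" by blast
  define a1 b1 a2 b2 where "a1 = a k1" "b1 = b k1" "a2 = a k2" "b2 = b k2"
  have u: "u = tensor a1 b1" and w: "w = tensor a2 b2"
    using k1 k2 by (simp_all add: x_def a1_b1_a2_b2_def)
  have units: "unit_vec a1" "unit_vec b1" "unit_vec a2" "unit_vec b2"
    using cab k1 k2 by (simp_all add: a1_b1_a2_b2_def)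
  consider "wedge a1 a2 = 0" | "wedge b1 b2 = 0" | "wedge a1 a2 \<noteq> 0" "wedge b1 b2 \<noteq> 0"
    by blast
  then show ?thesis
  proof cases
    case 1
    then have "vec.span {tensor a1 (axis 1 1), tensor a1 (axis 2 1)} = S"
      using span_tensor_axis_right_if_wedge_eq_0 sub dim S units(1) unfolding u w by blast
    moreover have "cinner (tensor a1 (axis 1 1)) (tensor a1 (axis 2 1)) = 0"
      by (simp add: cinner_tensor cinner_axis_1_2)
    ultimately show ?thesis using units(1) unit_vec_axis by blast
  next
    case 2
    then have "vec.span {tensor (axis 1 1) b1, tensor (axis 2 1) b1} = S"
      using span_tensor_axis_left_if_wedge_eq_0 sub dim S units(2) unfolding u w by blast
    moreover have "cinner (tensor (axis 1 1) b1) (tensor (axis 2 1) b1) = 0"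
      by (simp add: cinner_tensor cinner_axis_1_2)
    ultimately show ?thesis using units(2) unit_vec_axis by blast
  next
    case 3
    have "x k \<in> S \<and> coeff_det (x k) = 0" if "k < n" "c k \<noteq> 0" for k
      using mem_if_positive_weight[OF sub proj P c] that c[of k]
      by (force simp: x_def coeff_det_tensor)
    then have "cinner u w = 0"
      using orthogonal_if_generic_product_pair[OF proj P _ _ _ _ 3] S uw unfolding u w by blast
    then show ?thesis using units S unfolding u w by blast
  qed
qed

theorem lemma1:
  fixes S :: "qstate set" and P :: qop
  assumes "vec.subspace S" and "vec.dim S = 2"
    and "is_orth_projector S P" and "separable_op P"
  shows "(\<exists>e1 e2. e1 \<in> S \<and> e2 \<in> S \<and> unit_vec e1 \<and> unit_vec e2 \<and> cinner e1 e2 = 0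
            \<and> vec.span {e1, e2} = S \<and> is_product_state e1 \<and> is_product_state e2)
       \<and> (\<forall>\<psi> \<Phi>. \<psi> \<in> orth_compl S \<and> \<Phi> \<in> orth_compl S \<and> unit_vec \<psi> \<and> unit_vec \<Phi>
            \<and> cinner \<psi> \<Phi> = 0 \<and> entangled \<psi> \<and> entangled \<Phi> \<longrightarrow>
            has_two_antiparallel_eigenvalues (state_mat \<psi> ** matrix_inv (state_mat \<Phi>))
            \<and> concurrence \<psi> = concurrence \<Phi>)"
proof -
  obtain a b c d where units: "unit_vec a" "unit_vec b" "unit_vec c" "unit_vec d"
    and orth: "cinner (tensor a b) (tensor c d) = 0"
    and span: "vec.span {tensor a b, tensor c d} = S"
    using orthonormal_product_basis_if_separable_projector[OF assms] by blast
  have mem: "tensor a b \<in> S" "tensor c d \<in> S"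
    using span vec.span_base[of _ "{tensor a b, tensor c d}"] by auto
  have "\<exists>e1 e2. e1 \<in> S \<and> e2 \<in> S \<and> unit_vec e1 \<and> unit_vec e2 \<and> cinner e1 e2 = 0
            \<and> vec.span {e1, e2} = S \<and> is_product_state e1 \<and> is_product_state e2"
    using mem units orth span unit_vec_tensor unfolding is_product_state_def by blast
  moreover have "has_two_antiparallel_eigenvalues (state_mat \<psi> ** matrix_inv (state_mat \<Phi>))
            \<and> concurrence \<psi> = concurrence \<Phi>"
    if "\<psi> \<in> orth_compl S" "\<Phi> \<in> orth_compl S" "unit_vec \<psi>" "unit_vec \<Phi>"
      "cinner \<psi> \<Phi> = 0" "entangled \<psi>" "entangled \<Phi>" for \<psi> \<Phi>
    using antiparallel_eigenvalues_if_orthogonal_to_product_pair[OF units orth] mem that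
    unfolding orth_compl_def by blast
  ultimately show ?thesis by blast
qed

end
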